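(* Suppose the Oracle Mechanism with a polynomial-time $\gamma$-approximation oracle ($0<\gamma\le 1$), as described in the context, is run with the reduced budget $\gamma B$ in place of $B$. Then there is a function $\varepsilon(\theta)\ge0$ depending only on $\theta$ with $\varepsilon(\theta)\to0$ as $\theta\to0$ such that on every instance with largeness ratio $\theta$, the total payment is at most $(1+\varepsilon(\theta))B$ and the utility of the winning set is at least $(\gamma^2/2-\varepsilon(\theta))F^\star$, where $F^\star$ is the optimum for the original budget $B$.
   Context: Sellers $S=\{1,\dots,n\}$ each own one indivisible item and have a cost $c_i\ge0$. The buyer's utility is a monotone submodular $F:2^S\to\mathbb R_{\ge0}$, budget $B>0$. $c(T)=\sum_{i\in T}c_i$. For a budget $b$, $F^\star_b=\max\{F(T):c(T)\le b\}$; $F^\star=F^\star_B>0$; the largeness ratio is $\theta=\max_sF(\{s\})/F^\star$. Greedy sequence $\chi(F)=\langle x_1,\dots,x_n\rangle$: with $\chi_0=\emptyset$, $\chi_i=\{x_1,\dots,x_i\}$, $x_i$ maximizes $(F(\chi_{i-1}\cup\{s\})-F(\chi_{i-1}))/c_s$ over $s\notin\chi_{i-1}$ (ratio $+\infty$ if $c_s=0$; ties arbitrary); $\partial_i=F(\chi_i)-F(\chi_{i-1})$. A $\gamma$-approximation oracle, given an instance with known costs and a budget $b$, returns in polynomial time a set $T$ with $c(T)\le b$ and $F(T)\ge\gamma F^\star_b$. The mechanism with budget $b$: $\hat F$ = utility of the oracle's solution (budget $b$); for each seller $s$, $\hat F_s$ = utility of the oracle's solution with $s$ removed, $r_s=b/\hat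 F_s$; take the largest $k$ with $F(\chi_k)\le\hat F/2$; winners $\chi_k$; winner $x_j$ is paid $2r_{x_j}\partial_j$. Here $b=\gamma B$. *)

theory Defs
  imports Complex_Main "HOL-Library.Extended_Real"
begin

definition monotone_submodular :: "('a set \<Rightarrow> real) \<Rightarrow> 'a set \<Rightarrow> bool" where
  "monotone_submodular F S \<longleftrightarrow>
     (\<forall>A. A \<subseteq> S \<longrightarrow> 0 \<le> F A) \<and>
     (\<forall>A B. A \<subseteq> B \<and> B \<subseteq> S \<longrightarrow> F A \<le> F B) \<and>
     (\<forall>A B. A \<subseteq> S \<and> B \<subseteq> S \<longrightarrow> F (A \<union> B) + F (A \<inter> B) \<le> F A + F B)"

definition Fopt :: "('a set \<Rightarrow> real) \<Rightarrow> ('a \<Rightarrow> real) \<Rightarrow> 'a set \<Rightarrow> real \<Rightarrow> real" where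
  "Fopt F c A b = Max (F ` {T. T \<subseteq> A \<and> sum c T \<le> b})"

definition largeness :: "('a set \<Rightarrow> real) \<Rightarrow> ('a \<Rightarrow> real) \<Rightarrow> 'a set \<Rightarrow> real \<Rightarrow> real" where
  "largeness F c S B = Max ((\<lambda>s. F {s}) ` S) / Fopt F c S B"

definition approx_oracle ::
  "real \<Rightarrow> ('a set \<Rightarrow> real) \<Rightarrow> ('a \<Rightarrow> real) \<Rightarrow> 'a set \<Rightarrow> ('a set \<Rightarrow> real \<Rightarrow> 'a set) \<Rightarrow> bool" where
  "approx_oracle \<gamma> F c S Orc \<longleftrightarrow>
     (\<forall>A b. A \<subseteq> S \<and> 0 < b \<longrightarrow>
        Orc A b \<subseteq> A \<and> sum c (Orc A b) \<le> b \<and> \<gamma> * Fopt F c A b \<le> F (Orc A b))"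

definition greedy_ratio :: "('a set \<Rightarrow> real) \<Rightarrow> ('a \<Rightarrow> real) \<Rightarrow> 'a set \<Rightarrow> 'a \<Rightarrow> ereal" where
  "greedy_ratio F c A s =
     (if c s = 0 then \<infinity> else ereal ((F (insert s A) - F A) / c s))"

(* xs = <x_1,...,x_n> is a greedy sequence (ties arbitrary); chi_i = set (take i xs) *)
definition is_greedy_seq :: "('a set \<Rightarrow> real) \<Rightarrow> ('a \<Rightarrow> real) \<Rightarrow> 'a set \<Rightarrow> 'a list \<Rightarrow> bool" where
  "is_greedy_seq F c S xs \<longleftrightarrow> distinct xs \<and> set xs = S \<and>
     (\<forall>i < length xs. \<forall>s \<in> S - set (take i xs).
        greedy_ratio F c (set (take i xs)) s \<le> greedy_ratio F c (set (take i xs)) (xs ! i))"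

definition mech_cutoff ::
  "('a set \<Rightarrow> real) \<Rightarrow> 'a set \<Rightarrow> ('a set \<Rightarrow> real \<Rightarrow> 'a set) \<Rightarrow> real \<Rightarrow> 'a list \<Rightarrow> nat \<Rightarrow> bool" where
  "mech_cutoff F S Orc b xs k \<longleftrightarrow> k \<le> length xs \<and> F (set (take k xs)) \<le> F (Orc S b) / 2 \<and>
     (\<forall>k'. k < k' \<and> k' \<le> length xs \<longrightarrow> F (Orc S b) / 2 < F (set (take k' xs)))"

(* total payment: winner x_{j+1} = xs!j is paid 2 r_{x_{j+1}} \<partial>_{j+1},
   r_s = b / Fhat_s, Fhat_s = F(oracle solution on S - {s}, budget b) *)
definition mech_payment ::
  "('a set \<Rightarrow> real) \<Rightarrow> 'a set \<Rightarrow> ('a set \<Rightarrow> real \<Rightarrow> 'a set) \<Rightarrow> real \<Rightarrow> 'a list \<Rightarrow> nat \<Rightarrow> real" where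
  "mech_payment F S Orc b xs k =
     (\<Sum>j<k. 2 * (b / F (Orc (S - {xs ! j}) b)) * (F (set (take (Suc j) xs)) - F (set (take j xs))))"

end

theory Submission
  imports Defs
begin

text \<open>Let \<open>P\<close> be the optimum for the reduced budget \<open>\<gamma> B\<close> and \<open>m = \<theta> F\<^sup>\<star>\<close> the largest utility of a
  single seller. Peeling cheap items off an optimal budget-\<open>B\<close> set shows \<open>P \<ge> \<gamma> F\<^sup>\<star> - m\<close>.
  A winner is worth at most \<open>P / 2\<close>, so without it the oracle still finds utility
  \<open>\<gamma> max (P - m) (P / 2)\<close>; this bounds every rate \<open>r\<^sub>s\<close>, and since the winners' marginal gains
  add up to at most \<open>P / 2\<close>, the payment is \<open>(1 + O(\<theta> / \<gamma>)) B\<close>. The first loser lifts the prefix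
  above \<open>\<gamma> P / 2\<close> while adding at most \<open>m\<close>, so the winners are worth at least
  \<open>\<gamma> P / 2 - m \<ge> (\<gamma>\<^sup>2 / 2 - O(\<theta> / \<gamma>)) F\<^sup>\<star>\<close>.\<close>

lemma monotone_submodular_nonneg:
  "monotone_submodular F S \<Longrightarrow> A \<subseteq> S \<Longrightarrow> 0 \<le> F A"
  unfolding monotone_submodular_def by blast

lemma monotone_submodular_mono:
  "monotone_submodular F S \<Longrightarrow> A \<subseteq> B \<Longrightarrow> B \<subseteq> S \<Longrightarrow> F A \<le> F B"
  unfolding monotone_submodular_def by blast

lemma monotone_submodular_union_inter:
  "monotone_submodular F S \<Longrightarrow> A \<subseteq> S \<Longrightarrow> B \<subseteq> S \<Longrightarrow> F (A \<union> B) + F (A \<inter> B) \<le> F A + F B"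
  unfolding monotone_submodular_def by blast

lemma submodular_insert_le:
  assumes "monotone_submodular F S" "A \<subseteq> S" "t \<in> S"
  shows "F (insert t A) \<le> F A + F {t}"
proof -
  have "F (A \<union> {t}) + F (A \<inter> {t}) \<le> F A + F {t}"
    using monotone_submodular_union_inter[OF assms(1,2), of "{t}"] assms(3) by simp
  moreover have "0 \<le> F (A \<inter> {t})"
    using monotone_submodular_nonneg[OF assms(1)] assms(2) by blast
  ultimately show ?thesis by simp
qed

lemma submodular_le_Diff_singleton:
  assumes "monotone_submodular F S" "T \<subseteq> S" "t \<in> S"
  shows "F T \<le> F (T - {t}) + F {t}"
proof -
  have "F T \<le> F (insert t (T - {t}))"
    by (rule monotone_submodular_mono[OF assms(1)]) (use assms in auto)
  also have "\<dots> \<le> F (T - {t}) + F {t}"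
    using submodular_insert_le[OF assms(1), of "T - {t}" t] assms by blast
  finally show ?thesis .
qed

lemma submodular_sum_marginals_le:
  assumes "monotone_submodular F S" "T \<subseteq> S" "finite A" "A \<subseteq> T"
  shows "(\<Sum>t\<in>A. F T - F (T - {t})) \<le> F T - F (T - A)"
  using assms(3,4)
proof (induction A rule: finite_induct)
  case empty
  then show ?case by simp
next
  case (insert a A)
  have "F ((T - {a}) \<union> (T - A)) + F ((T - {a}) \<inter> (T - A)) \<le> F (T - {a}) + F (T - A)"
    by (rule monotone_submodular_union_inter[OF assms(1)]) (use assms(2) in auto)
  moreover have "(T - {a}) \<union> (T - A) = T" using insert by blast
  moreover have "(T - {a}) \<inter> (T - A) = T - insert a A" by blast
  ultimately have "F T + F (T - insert a A) \<le> F (T - {a}) + F (T - A)" by simp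
  then show ?case using insert by simp
qed

lemma submodular_exists_cheap_marginal:
  assumes "monotone_submodular F S" "T \<subseteq> S" "finite T" "\<forall>s\<in>S. 0 \<le> c s" "0 < sum c T"
  shows "\<exists>t\<in>T. sum c T * (F T - F (T - {t})) \<le> c t * F T"
proof (rule ccontr)
  assume "\<not> ?thesis"
  then have "\<forall>t\<in>T. c t * F T < sum c T * (F T - F (T - {t}))" by auto
  moreover have "T \<noteq> {}" using assms(5) by auto
  ultimately have "(\<Sum>t\<in>T. c t * F T) < (\<Sum>t\<in>T. sum c T * (F T - F (T - {t})))"
    using assms(3) by (intro sum_strict_mono) auto
  also have "\<dots> = sum c T * (\<Sum>t\<in>T. F T - F (T - {t}))"
    by (simp add: sum_distrib_left)
  also have "\<dots> \<le> sum c T * (F T - F {})"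
    using submodular_sum_marginals_le[OF assms(1-3)] assms(5) by (intro mult_left_mono) auto
  also have "\<dots> \<le> sum c T * F T"
    using monotone_submodular_nonneg[OF assms(1), of "{}"] assms(5) by simp
  finally show False by (simp add: sum_distrib_right)
qed

text \<open>Removing a cheap element keeps the utility-per-cost ratio, so peeling elements off an
  over-budget set until it fits into budget \<open>\<beta>\<close> retains the fraction \<open>\<beta> / c(T)\<close> of its utility,
  up to the one element removed last.\<close>

lemma submodular_exists_subset_within_budget:
  assumes ms: "monotone_submodular F S" and fin: "finite S" and cost: "\<forall>s\<in>S. 0 \<le> c s"
    and m: "\<forall>t\<in>S. F {t} \<le> m"
  shows "T \<subseteq> S \<Longrightarrow> 0 \<le> \<beta> \<Longrightarrow> \<beta> < sum c T \<Longrightarrow>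
    \<exists>U\<subseteq>T. sum c U \<le> \<beta> \<and> \<beta> / sum c T * F T - m \<le> F U"
proof (induction "card T" arbitrary: T rule: less_induct)
  case less
  have finT: "finite T" using less.prems fin finite_subset by blast
  have cT: "0 < sum c T" using less.prems by linarith
  obtain t where t: "t \<in> T" "sum c T * (F T - F (T - {t})) \<le> c t * F T"
    using submodular_exists_cheap_marginal[OF ms less.prems(1) finT cost cT] by blast
  have cTt: "sum c (T - {t}) = sum c T - c t" using t finT by (simp add: sum_diff1)
  show ?case
  proof (cases "sum c (T - {t}) \<le> \<beta>")
    case True
    have "F T \<le> F (T - {t}) + m"
      using submodular_le_Diff_singleton[OF ms less.prems(1)] m t less.prems(1) by fastforce
    moreover have "\<beta> / sum c T * F T \<le> F T"
      using monotone_submodular_nonneg[OF ms less.prems(1)] less.prems cT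
      by (intro mult_left_le_one_le) auto
    ultimately show ?thesis using True by (intro exI[of _ "T - {t}"]) auto
  next
    case False
    then have cTt_pos: "0 < sum c (T - {t})" using less.prems by linarith
    have "\<exists>U\<subseteq>T - {t}. sum c U \<le> \<beta> \<and> \<beta> / sum c (T - {t}) * F (T - {t}) - m \<le> F U"
    proof (rule less.hyps)
      show "card (T - {t}) < card T" using finT t(1) by (rule card_Diff1_less)
      show "T - {t} \<subseteq> S" using less.prems(1) by blast
    qed (use less.prems False in auto)
    then obtain U where U: "U \<subseteq> T - {t}" "sum c U \<le> \<beta>"
      "\<beta> / sum c (T - {t}) * F (T - {t}) - m \<le> F U"
      by blast
    have "sum c (T - {t}) * F T \<le> sum c T * F (T - {t})"
      using t(2) by (simp add: cTt algebra_simps)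
    then have "F T / sum c T \<le> F (T - {t}) / sum c (T - {t})"
      using cT cTt_pos by (simp add: divide_simps mult.commute)
    then have "\<beta> * (F T / sum c T) \<le> \<beta> * (F (T - {t}) / sum c (T - {t}))"
      using less.prems(2) by (rule mult_left_mono)
    then show ?thesis using U by (intro exI[of _ U]) auto
  qed
qed

lemma finite_feasible_sets:
  "finite A \<Longrightarrow> finite {T. T \<subseteq> A \<and> sum c T \<le> b}"
  by (rule finite_subset[of _ "Pow A"]) auto

lemma Fopt_ge:
  assumes "finite A" "T \<subseteq> A" "sum c T \<le> b"
  shows "F T \<le> Fopt F c A b"
  unfolding Fopt_def using assms finite_feasible_sets[OF assms(1)] by (intro Max_ge) auto

lemma Fopt_attained:
  assumes "finite A" "0 \<le> b"
  obtains T where "T \<subseteq> A" "sum c T \<le> b" "F T = Fopt F c A b"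
proof -
  have "{} \<in> {T. T \<subseteq> A \<and> sum c T \<le> b}" using assms by auto
  then have "Fopt F c A b \<in> F ` {T. T \<subseteq> A \<and> sum c T \<le> b}"
    unfolding Fopt_def using finite_feasible_sets[OF assms(1)] by (intro Max_in) auto
  then obtain T where "T \<in> {T. T \<subseteq> A \<and> sum c T \<le> b}" "Fopt F c A b = F T" ..
  then show ?thesis by (intro that[of T]) auto
qed

lemma Fopt_nonneg:
  assumes "monotone_submodular F A" "finite A" "0 \<le> b"
  shows "0 \<le> Fopt F c A b"
proof -
  have "F {} \<le> Fopt F c A b" using assms(2,3) by (intro Fopt_ge) auto
  then show ?thesis using monotone_submodular_nonneg[OF assms(1), of "{}"] by simp
qed

lemma Fopt_Diff_singleton_ge:
  assumes ms: "monotone_submodular F S" and "finite S" "\<forall>s\<in>S. 0 \<le> c s" "s \<in> S" "0 \<le> b"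
  shows "Fopt F c S b - F {s} \<le> Fopt F c (S - {s}) b"
proof -
  obtain T where T: "T \<subseteq> S" "sum c T \<le> b" "F T = Fopt F c S b"
    using Fopt_attained[OF assms(2,5)] by blast
  have "sum c (T - {s}) \<le> sum c T"
  proof (rule sum_mono2)
    show "finite T" using T(1) assms(2) by (rule finite_subset)
  qed (use T(1) assms(3) in auto)
  then have "F (T - {s}) \<le> Fopt F c (S - {s}) b"
    using T assms(2) by (intro Fopt_ge) auto
  moreover have "F T \<le> F (T - {s}) + F {s}"
    using submodular_le_Diff_singleton[OF ms T(1) assms(4)] .
  ultimately show ?thesis using T(3) by linarith
qed

text \<open>An optimal set for budget \<open>B\<close> either fits into \<open>\<gamma> B\<close> already or is cut down to it at the
  cost of one item.\<close>

lemma Fopt_scaled_budget_ge: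
  assumes ms: "monotone_submodular F S" and fin: "finite S" and cost: "\<forall>s\<in>S. 0 \<le> c s"
    and m: "\<forall>s\<in>S. F {s} \<le> m" "0 \<le> m"
    and \<gamma>: "0 < \<gamma>" "\<gamma> \<le> 1" and B: "0 < B"
  shows "\<gamma> * Fopt F c S B - m \<le> Fopt F c S (\<gamma> * B)"
proof -
  obtain T where T: "T \<subseteq> S" "sum c T \<le> B" "F T = Fopt F c S B"
    using Fopt_attained[OF fin, of B c F] B by auto
  show ?thesis
  proof (cases "sum c T \<le> \<gamma> * B")
    case True
    have "\<gamma> * F T \<le> F T"
      using monotone_submodular_nonneg[OF ms T(1)] \<gamma> by (intro mult_left_le_one_le) auto
    moreover have "F T \<le> Fopt F c S (\<gamma> * B)" using True T(1) fin by (intro Fopt_ge)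
    ultimately show ?thesis using m(2) unfolding T(3)[symmetric] by linarith
  next
    case False
    then obtain U where U: "U \<subseteq> T" "sum c U \<le> \<gamma> * B" "\<gamma> * B / sum c T * F T - m \<le> F U"
      using submodular_exists_subset_within_budget[OF ms fin cost m(1) T(1), of "\<gamma> * B"] \<gamma> B
      by auto
    have "0 < \<gamma> * B" using \<gamma> B by simp
    then have "0 < sum c T" using False by linarith
    moreover have "\<gamma> * sum c T \<le> \<gamma> * B" using T(2) \<gamma> by simp
    ultimately have "\<gamma> \<le> \<gamma> * B / sum c T" by (simp add: le_divide_eq)
    then have "\<gamma> * F T \<le> \<gamma> * B / sum c T * F T"
      using monotone_submodular_nonneg[OF ms T(1)] by (rule mult_right_mono)
    moreover have "F U \<le> Fopt F c S (\<gamma> * B)" using U T(1) fin by (intro Fopt_ge) auto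
    ultimately show ?thesis using U(3) unfolding T(3)[symmetric] by linarith
  qed
qed

lemma singleton_le_largeness:
  assumes "finite S" "s \<in> S" "0 < Fopt F c S B"
  shows "F {s} \<le> \<bar>largeness F c S B\<bar> * Fopt F c S B"
proof -
  have "F {s} \<le> Max ((\<lambda>s. F {s}) ` S)" using assms by (intro Max_ge) auto
  also have "\<dots> = largeness F c S B * Fopt F c S B"
    unfolding largeness_def using assms(3) by simp
  also have "\<dots> \<le> \<bar>largeness F c S B\<bar> * Fopt F c S B" using assms(3) by (intro mult_right_mono) auto
  finally show ?thesis .
qed

locale oracle_mechanism =
  fixes F :: "'a set \<Rightarrow> real" and c :: "'a \<Rightarrow> real" and S :: "'a set"
    and \<gamma> b :: real and Orc :: "'a set \<Rightarrow> real \<Rightarrow> 'a set" and xs :: "'a list" and k :: nat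
  assumes submodular: "monotone_submodular F S" and finite_S: "finite S"
    and costs_nonneg: "\<forall>s\<in>S. 0 \<le> c s"
    and gamma_pos: "0 < \<gamma>" and gamma_le_one: "\<gamma> \<le> 1" and budget_pos: "0 < b"
    and oracle_approx: "approx_oracle \<gamma> F c S Orc"
    \<comment> \<open>of the greedy sequence only this is needed: the bounds hold for every order of the sellers\<close>
    and set_xs: "set xs = S"
    and cutoff: "mech_cutoff F S Orc b xs k"
begin

lemma oracle_le_Fopt: "A \<subseteq> S \<Longrightarrow> F (Orc A b) \<le> Fopt F c A b"
  using oracle_approx budget_pos finite_S unfolding approx_oracle_def
  by (intro Fopt_ge) (auto intro: finite_subset)

lemma Fopt_le_oracle: "A \<subseteq> S \<Longrightarrow> \<gamma> * Fopt F c A b \<le> F (Orc A b)"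
  using oracle_approx budget_pos unfolding approx_oracle_def by blast

lemma prefix_subset: "set (take j xs) \<subseteq> S"
  using set_take_subset set_xs by metis

lemma prefix_mono: "i \<le> j \<Longrightarrow> F (set (take i xs)) \<le> F (set (take j xs))"
  using monotone_submodular_mono[OF submodular set_take_subset_set_take prefix_subset] .

lemma winners_utility_le: "F (set (take k xs)) \<le> Fopt F c S b / 2"
  using cutoff oracle_le_Fopt[of S] unfolding mech_cutoff_def by auto

lemma winner_singleton_le:
  assumes "j < k"
  shows "xs ! j \<in> S" "F {xs ! j} \<le> Fopt F c S b / 2"
proof -
  have "j < length xs" using assms cutoff unfolding mech_cutoff_def by simp
  then have "take k xs ! j \<in> set (take k xs)" using assms by (intro nth_mem) simp
  then have "xs ! j \<in> set (take k xs)" using assms by simp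
  then show "xs ! j \<in> S" using prefix_subset by blast
  have "F {xs ! j} \<le> F (set (take k xs))"
    using monotone_submodular_mono[OF submodular _ prefix_subset] \<open>xs ! j \<in> set (take k xs)\<close>
    by simp
  then show "F {xs ! j} \<le> Fopt F c S b / 2" using winners_utility_le by linarith
qed

text \<open>A winner is worth at most half of the optimum, so removing it leaves at least half of it.\<close>

lemma oracle_without_winner_ge:
  assumes "j < k" and m: "\<forall>s\<in>S. F {s} \<le> m"
  shows "\<gamma> * max (Fopt F c S b - m) (Fopt F c S b / 2) \<le> F (Orc (S - {xs ! j}) b)"
proof -
  have "Fopt F c S b - F {xs ! j} \<le> Fopt F c (S - {xs ! j}) b"
    using winner_singleton_le[OF assms(1)] submodular finite_S costs_nonneg budget_pos
    by (intro Fopt_Diff_singleton_ge) auto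
  moreover have "max (Fopt F c S b - m) (Fopt F c S b / 2) \<le> Fopt F c S b - F {xs ! j}"
    using winner_singleton_le[OF assms(1)] m by auto
  ultimately have "\<gamma> * max (Fopt F c S b - m) (Fopt F c S b / 2) \<le> \<gamma> * Fopt F c (S - {xs ! j}) b"
    using gamma_pos by (intro mult_left_mono) auto
  also have "\<dots> \<le> F (Orc (S - {xs ! j}) b)" by (rule Fopt_le_oracle) blast
  finally show ?thesis .
qed

lemma prefix_gains_sum_le:
  "(\<Sum>j<k. F (set (take (Suc j) xs)) - F (set (take j xs))) \<le> Fopt F c S b / 2"
proof -
  have "(\<Sum>j<k. F (set (take (Suc j) xs)) - F (set (take j xs)))
      = F (set (take k xs)) - F (set (take 0 xs))"
    by (rule sum_lessThan_telescope)
  also have "\<dots> \<le> Fopt F c S b / 2"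
    using winners_utility_le monotone_submodular_nonneg[OF submodular, of "{}"] by simp
  finally show ?thesis .
qed

lemma mech_payment_le:
  assumes m: "\<forall>s\<in>S. F {s} \<le> m"
  shows "mech_payment F S Orc b xs k
    \<le> b / \<gamma> * (Fopt F c S b / max (Fopt F c S b - m) (Fopt F c S b / 2))"
proof -
  define P where "P = Fopt F c S b"
  define D where "D = max (P - m) (P / 2)"
  define gain where "gain j = F (set (take (Suc j) xs)) - F (set (take j xs))" for j
  have gain_nonneg: "0 \<le> gain j" for j
    unfolding gain_def using prefix_mono[of j "Suc j"] by simp
  have gains: "(\<Sum>j<k. gain j) \<le> P / 2"
    unfolding gain_def P_def by (rule prefix_gains_sum_le)
  have payment: "mech_payment F S Orc b xs k = (\<Sum>j<k. 2 * (b / F (Orc (S - {xs ! j}) b)) * gain j)"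
    unfolding mech_payment_def gain_def ..
  show ?thesis
  proof (cases "0 < P")
    case True
    then have D: "0 < D" unfolding D_def by simp
    have rate: "b / F (Orc (S - {xs ! j}) b) \<le> b / (\<gamma> * D)" if "j < k" for j
    proof -
      have "\<gamma> * D \<le> F (Orc (S - {xs ! j}) b)"
        using oracle_without_winner_ge[OF that m] unfolding P_def D_def .
      moreover have "0 < \<gamma> * D" using gamma_pos D by simp
      ultimately show ?thesis using budget_pos by (intro divide_left_mono) auto
    qed
    have "mech_payment F S Orc b xs k \<le> (\<Sum>j<k. 2 * (b / (\<gamma> * D)) * gain j)"
      unfolding payment using rate gain_nonneg
      by (intro sum_mono mult_right_mono mult_left_mono) auto
    also have "\<dots> = 2 * (b / (\<gamma> * D)) * (\<Sum>j<k. gain j)"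
      by (simp add: sum_distrib_left)
    also have "\<dots> \<le> 2 * (b / (\<gamma> * D)) * (P / 2)"
      using gains gamma_pos budget_pos D by (intro mult_left_mono) auto
    also have "\<dots> = b / \<gamma> * (P / D)" by simp
    finally show ?thesis unfolding P_def D_def .
  next
    case False
    then have "P = 0"
      using Fopt_nonneg[OF submodular finite_S, of b c] budget_pos unfolding P_def by simp
    moreover have "0 \<le> (\<Sum>j<k. gain j)" using gain_nonneg by (rule sum_nonneg)
    ultimately have "(\<Sum>j<k. gain j) = 0" using gains by simp
    then have "gain j = 0" if "j < k" for j
      using sum_nonneg_eq_0_iff[of "{..<k}" gain] gain_nonneg that by simp
    then show ?thesis unfolding payment P_def[symmetric] \<open>P = 0\<close> by simp
  qed
qed

lemma winners_utility_ge:
  assumes m: "\<forall>s\<in>S. F {s} \<le> m" "0 \<le> m"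
  shows "\<gamma> * Fopt F c S b / 2 - m \<le> F (set (take k xs))"
proof (cases "k < length xs")
  case True
  then have next_in_S: "xs ! k \<in> S" using set_xs nth_mem by blast
  have "\<gamma> * Fopt F c S b / 2 \<le> F (Orc S b) / 2" using Fopt_le_oracle[of S] by simp
  also have "\<dots> < F (set (take (Suc k) xs))"
    using cutoff True unfolding mech_cutoff_def by auto
  also have "\<dots> \<le> F (set (take k xs)) + F {xs ! k}"
    using submodular_insert_le[OF submodular prefix_subset next_in_S] True
    by (simp add: take_Suc_conv_app_nth)
  also have "\<dots> \<le> F (set (take k xs)) + m" using m(1) next_in_S by auto
  finally show ?thesis by simp
next
  case False
  then have "set (take k xs) = S" using set_xs by simp
  obtain T where T: "T \<subseteq> S" "F T = Fopt F c S b"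
    using Fopt_attained[OF finite_S, of b c F] budget_pos by auto
  have "Fopt F c S b \<le> F (set (take k xs))"
    using monotone_submodular_mono[OF submodular T(1) order_refl]
    unfolding T(2) \<open>set (take k xs) = S\<close> .
  moreover have "\<gamma> * Fopt F c S b \<le> Fopt F c S b"
    using Fopt_nonneg[OF submodular finite_S] budget_pos gamma_pos gamma_le_one
    by (intro mult_left_le_one_le) auto
  ultimately show ?thesis using m(2) Fopt_nonneg[OF submodular finite_S, of b c] budget_pos
    by linarith
qed

end

text \<open>When \<open>m\<close> is small compared with \<open>q\<close> the first term of the maximum dominates; otherwise the
  ratio is at most \<open>2\<close>.\<close>

lemma divide_max_half_le:
  fixes P m q :: real
  assumes P: "0 \<le> P" and m: "0 \<le> m" and q: "0 < q" "q - m \<le> P"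
  shows "P / max (P - m) (P / 2) \<le> 1 + 4 * m / q"
proof (cases "4 * m \<le> q")
  case True
  then have Pm: "q / 2 \<le> P - m" using q by linarith
  then have Pm_pos: "0 < P - m" using q by linarith
  have "P / max (P - m) (P / 2) \<le> P / (P - m)"
    using P Pm_pos by (intro divide_left_mono) auto
  also have "\<dots> = 1 + m / (P - m)" using Pm_pos by (simp add: field_simps)
  also have "m / (P - m) \<le> m / (q / 2)"
    using Pm m q by (intro divide_left_mono) auto
  also have "\<dots> \<le> 4 * m / q" using m q by (simp add: field_simps)
  finally show ?thesis by simp
next
  case False
  then have "1 \<le> 4 * m / q" using q by (simp add: le_divide_eq)
  moreover have "P / max (P - m) (P / 2) \<le> 2"
  proof (cases "P = 0")
    case False
    then have "P / max (P - m) (P / 2) \<le> P / (P / 2)"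
      using P by (intro divide_left_mono) auto
    then show ?thesis using False by simp
  qed simp
  ultimately show ?thesis by linarith
qed

lemma oracle_mechanism_guarantees:
  assumes "oracle_mechanism F c S \<gamma> (\<gamma> * B) Orc xs k" and B: "0 < B" "0 < Fopt F c S B"
    and m: "\<forall>s\<in>S. F {s} \<le> m" "0 \<le> m"
  shows "mech_payment F S Orc (\<gamma> * B) xs k \<le> (1 + 4 * m / (\<gamma> * Fopt F c S B)) * B"
    and "(\<gamma>\<^sup>2 / 2 - 4 * m / (\<gamma> * Fopt F c S B)) * Fopt F c S B \<le> F (set (take k xs))"
proof -
  interpret oracle_mechanism F c S \<gamma> "\<gamma> * B" Orc xs k by fact
  define Fs where "Fs = Fopt F c S B"
  define P where "P = Fopt F c S (\<gamma> * B)"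
  have scaled: "\<gamma> * Fs - m \<le> P"
    unfolding Fs_def P_def
    using Fopt_scaled_budget_ge[OF submodular finite_S costs_nonneg m gamma_pos gamma_le_one B(1)] .
  have P: "0 \<le> P" unfolding P_def using Fopt_nonneg[OF submodular finite_S] budget_pos by simp
  have q: "0 < \<gamma> * Fs" unfolding Fs_def using gamma_pos B(2) by simp
  have "mech_payment F S Orc (\<gamma> * B) xs k \<le> \<gamma> * B / \<gamma> * (P / max (P - m) (P / 2))"
    unfolding P_def by (rule mech_payment_le[OF m(1)])
  also have "\<dots> = B * (P / max (P - m) (P / 2))" using gamma_pos by simp
  also have "\<dots> \<le> B * (1 + 4 * m / (\<gamma> * Fs))"
    using divide_max_half_le[OF P m(2) q scaled] B(1) by (intro mult_left_mono) auto
  finally show "mech_payment F S Orc (\<gamma> * B) xs k \<le> (1 + 4 * m / (\<gamma> * Fopt F c S B)) * B"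
    unfolding Fs_def by (simp add: mult.commute)
  have "\<gamma> * m \<le> m" using m(2) gamma_pos gamma_le_one by (intro mult_left_le_one_le) auto
  then have "m \<le> m / \<gamma>" using gamma_pos by (simp add: le_divide_eq mult.commute)
  moreover have "\<gamma> * (\<gamma> * Fs) - \<gamma> * m \<le> \<gamma> * P"
    using scaled gamma_pos by (simp flip: right_diff_distrib)
  moreover have "\<gamma> * P / 2 - m \<le> F (set (take k xs))"
    unfolding P_def by (rule winners_utility_ge[OF m])
  ultimately have "\<gamma> * (\<gamma> * Fs) / 2 - 4 * (m / \<gamma>) \<le> F (set (take k xs))"
    using \<open>\<gamma> * m \<le> m\<close> m(2) by linarith
  moreover have "(\<gamma>\<^sup>2 / 2 - 4 * m / (\<gamma> * Fs)) * Fs = \<gamma> * (\<gamma> * Fs) / 2 - 4 * (m / \<gamma>)"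
    using B(2) gamma_pos unfolding Fs_def by (simp add: field_simps power2_eq_square)
  ultimately show "(\<gamma>\<^sup>2 / 2 - 4 * m / (\<gamma> * Fopt F c S B)) * Fopt F c S B \<le> F (set (take k xs))"
    unfolding Fs_def by simp
qed

theorem corollary2:
  fixes \<gamma> :: real
  assumes "0 < \<gamma>" and "\<gamma> \<le> 1"
  shows "\<exists>\<epsilon> :: real \<Rightarrow> real. (\<forall>t. 0 \<le> \<epsilon> t) \<and> (\<epsilon> \<longlongrightarrow> 0) (at_right 0) \<and>
    (\<forall>(n::nat) (c::nat \<Rightarrow> real) (F::nat set \<Rightarrow> real) (B::real)
        (Orc::nat set \<Rightarrow> real \<Rightarrow> nat set) (xs::nat list) (k::nat).
       (\<forall>s \<in> {1..n}. 0 \<le> c s) \<and> monotone_submodular F {1..n} \<and> 0 < B \<and>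
       0 < Fopt F c {1..n} B \<and>
       approx_oracle \<gamma> F c {1..n} Orc \<and>
       is_greedy_seq F c {1..n} xs \<and>
       mech_cutoff F {1..n} Orc (\<gamma> * B) xs k
       \<longrightarrow>
       mech_payment F {1..n} Orc (\<gamma> * B) xs k \<le> (1 + \<epsilon> (largeness F c {1..n} B)) * B \<and>
       (\<gamma>\<^sup>2 / 2 - \<epsilon> (largeness F c {1..n} B)) * Fopt F c {1..n} B \<le> F (set (take k xs)))"
proof (intro exI conjI allI impI)
  define \<epsilon> where "\<epsilon> t = 4 * \<bar>t\<bar> / \<gamma>" for t :: real
  show "0 \<le> \<epsilon> t" for t unfolding \<epsilon>_def using assms(1) by simp
  show "(\<epsilon> \<longlongrightarrow> 0) (at_right 0)" unfolding \<epsilon>_def using assms(1) by (intro tendsto_eq_intros) auto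
  fix n :: nat and c :: "nat \<Rightarrow> real" and F :: "nat set \<Rightarrow> real" and B :: real
    and Orc :: "nat set \<Rightarrow> real \<Rightarrow> nat set" and xs :: "nat list" and k :: nat
  assume "(\<forall>s \<in> {1..n}. 0 \<le> c s) \<and> monotone_submodular F {1..n} \<and> 0 < B \<and>
       0 < Fopt F c {1..n} B \<and> approx_oracle \<gamma> F c {1..n} Orc \<and>
       is_greedy_seq F c {1..n} xs \<and> mech_cutoff F {1..n} Orc (\<gamma> * B) xs k"
  then have inst: "(\<forall>s \<in> {1..n}. 0 \<le> c s)" "monotone_submodular F {1..n}" "0 < B"
    "0 < Fopt F c {1..n} B" "approx_oracle \<gamma> F c {1..n} Orc"
    "is_greedy_seq F c {1..n} xs" "mech_cutoff F {1..n} Orc (\<gamma> * B) xs k"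
    by auto
  have mech: "oracle_mechanism F c {1..n} \<gamma> (\<gamma> * B) Orc xs k"
    using inst assms by unfold_locales (auto simp: is_greedy_seq_def)
  \<comment> \<open>the absolute value keeps \<open>m\<close> nonnegative when there are no sellers (\<open>Max {}\<close> is unspecified)\<close>
  define m where "m = \<bar>largeness F c {1..n} B\<bar> * Fopt F c {1..n} B"
  have m: "\<forall>s\<in>{1..n}. F {s} \<le> m" "0 \<le> m"
    unfolding m_def using singleton_le_largeness[of "{1..n}" _ F c B] inst(4) by auto
  have \<epsilon>_eq: "\<epsilon> (largeness F c {1..n} B) = 4 * m / (\<gamma> * Fopt F c {1..n} B)"
    unfolding \<epsilon>_def m_def using inst(4) assms(1) by simp
  show "mech_payment F {1..n} Orc (\<gamma> * B) xs k \<le> (1 + \<epsilon> (largeness F c {1..n} B)) * B"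
    and "(\<gamma>\<^sup>2 / 2 - \<epsilon> (largeness F c {1..n} B)) * Fopt F c {1..n} B \<le> F (set (take k xs))"
    unfolding \<epsilon>_eq using oracle_mechanism_guarantees[OF mech inst(3,4) m] by auto
qed

end
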